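(* Fix $r\ge2$ and $c>\ln4$, and set $c'=c/2-\ln2$ and $\tilde\varepsilon_r=(cm\,2^{r-m})^{1/2^r}$. For $\mathrm{RM}(r,m)$ used on a binary symmetric channel with crossover probability $(1-\tilde\varepsilon_r)/2$, for all sufficiently large $m$ the algorithm $\Phi_r^m$ satisfies, for every end node of its recursion, $$p<\max\left\{e^{-c'm},\,2^{-(m-r)/2+m^{1/2}}\right\},$$ where $p$ is the conditional error probability at that end node defined below; in particular all these probabilities tend to $0$ as $m\to\infty$.
   Context: Assume the all-ones codeword (in $\pm1$ form) is sent; received $y_1,\dots,y_n$ ($n=2^m$) are i.i.d. with $\Pr\{y_i=-1\}=(1-\tilde\varepsilon_r)/2$. For binary strings $\xi$ define $\mathbf y(\varnothing)=\mathbf y$ and, splitting $\mathbf y(\underline\xi)$ into halves $(\mathbf y',\mathbf y'')$, $\mathbf y(\underline\xi,0)=\mathbf y'\mathbf y''$ (componentwise), $\mathbf y(\underline\xi,1)=(\mathbf y'+\mathbf y'')/2$. Algorithm $\Phi_r^m$: on $(\mathbf y',\mathbf y'')$ with $1<r<m$ it decodes $\mathbf y'\mathbf y''$ recursively in $\mathrm{RM}(r-1,m-1)$ obtaining $\hat{\mathbf v}$, then $(\mathbf y'+\mathbf y''\hat{\mathbf v})/2$ recursively in $\mathrm{RM}(r,m-1)$; at $r=1$ (biorthogonal code) or $r=m$ (full space) it performs MD decoding (output the codeword maximizing the inner product with the input). In the recursion tree, from node $(m,r)$ a step $0$ leads to $(m'-1,r'-1)$ and a step $1$ to $(m'-1,r')$;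 the walk stops at a biorthogonal node $(g+1,1)$ or at a full-space node $(h,h)$. With all previous decisions correct, the input at the end node reached by the step string $\underline\xi$ is $\mathbf y(\underline\xi)$. For a biorthogonal node, $p$ is the probability that MD decoding of $\mathbf y(\underline\xi)$ in $\mathrm{RM}(1,g+1)$ returns a codeword other than the all-ones word; for a full-space node, for each coordinate $\sigma$, $p$ is the probability that the $\sigma$-th entry of $\mathbf y(\underline\xi)$ is negative (zero counted with probability $1/2$). *)

theory Defs
  imports Complex_Main
begin

definition sign_vectors :: "nat \<Rightarrow> real list set" where
  "sign_vectors n = {ys. length ys = n \<and> set ys \<subseteq> {-1, 1}}"

text \<open>Probability of a received word when the all-ones word is sent over a BSC
  with crossover probability (1 - eps)/2 (entries i.i.d.).\<close>
definition word_prob :: "real \<Rightarrow> real list \<Rightarrow> real" where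
  "word_prob eps ys = (\<Prod>i<length ys. if ys ! i = -1 then (1 - eps) / 2 else (1 + eps) / 2)"

definition expect :: "real \<Rightarrow> nat \<Rightarrow> (real list \<Rightarrow> real) \<Rightarrow> real" where
  "expect eps n f = (\<Sum>ys\<in>sign_vectors n. word_prob eps ys * f ys)"

text \<open>One step of the transform: False = step 0 (componentwise product of the halves),
  True = step 1 (half the sum of the halves).\<close>
definition half_step :: "bool \<Rightarrow> real list \<Rightarrow> real list" where
  "half_step b ys = (let h = length ys div 2; y1 = take h ys; y2 = drop h ys in
     if b then map2 (\<lambda>a c. (a + c) / 2) y1 y2 else map2 (*) y1 y2)"

fun transf :: "real list \<Rightarrow> bool list \<Rightarrow> real list" where
  "transf ys [] = ys"
| "transf ys (b # bs) = transf (half_step b ys) bs"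

fun node :: "nat \<Rightarrow> nat \<Rightarrow> bool list \<Rightarrow> nat \<times> nat" where
  "node m r [] = (m, r)"
| "node m r (b # bs) = node (m - 1) (if b then r else r - 1) bs"

text \<open>xi leads from (m,r) to an end node: every proper prefix reaches an inner node
  (1 < r' < m'), and xi reaches a biorthogonal node (r' = 1) or a full-space node (r' = m').\<close>
definition end_path :: "nat \<Rightarrow> nat \<Rightarrow> bool list \<Rightarrow> bool" where
  "end_path m r xi \<longleftrightarrow>
     (\<forall>k < length xi. 1 < snd (node m r (take k xi)) \<and> snd (node m r (take k xi)) < fst (node m r (take k xi)))
     \<and> (snd (node m r xi) = 1 \<or> snd (node m r xi) = fst (node m r xi))"

text \<open>The biorthogonal code RM(1,M) in +-1 form (affine Boolean functions of the index bits).\<close>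
definition rm1 :: "nat \<Rightarrow> real list set" where
  "rm1 M = {map (\<lambda>i. s * (-1) ^ card {j. j < M \<and> bit a j \<and> bit (i::nat) j}) [0..<2 ^ M] |(a::nat) (s::real).
              a < 2 ^ M \<and> (s = 1 \<or> s = -1)}"

definition inner :: "real list \<Rightarrow> real list \<Rightarrow> real" where
  "inner u v = sum_list (map2 (*) u v)"

text \<open>Error indicator of MD decoding in RM(1,M) of input z (ties broken uniformly at random):
  one minus the probability that the all-ones word is output.\<close>
definition md_err_biorth :: "nat \<Rightarrow> real list \<Rightarrow> real" where
  "md_err_biorth M z = (let S = {c \<in> rm1 M. \<forall>c' \<in> rm1 M. inner c' z \<le> inner c z} in
     1 - (if replicate (2 ^ M) 1 \<in> S then 1 / real (card S) else 0))"

text \<open>Error indicator of a single coordinate at a full-space node (zero counted with probability 1/2).\<close>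
definition coord_err :: "real \<Rightarrow> real" where
  "coord_err x = (if x < 0 then 1 else if x = 0 then 1 / 2 else 0)"

definition eps_tilde :: "nat \<Rightarrow> real \<Rightarrow> nat \<Rightarrow> real" where
  "eps_tilde r c m = (c * real m * 2 powr (real r - real m)) powr (1 / 2 ^ r)"

definition bound :: "nat \<Rightarrow> real \<Rightarrow> nat \<Rightarrow> real" where
  "bound r c m = max (exp (- (c / 2 - ln 2) * real m)) (2 powr (- (real m - real r) / 2 + sqrt (real m)))"

end

theory Submission
  imports Defs "HOL-Probability.Probability" "HOL-Real_Asymp.Real_Asymp"
begin

text \<open>
  With the all-ones word sent, the received coordinates are i.i.d. \<open>\<pm>1\<close> symbols of mean
  \<open>\<epsilon>\<close>, and every step of the transform \<open>y \<mapsto> y(\<xi>)\<close> keeps the coordinates i.i.d.: a step 1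
  averages two independent copies, which keeps the mean and halves the sub-Gaussian variance
  proxy, and a step 0 multiplies them, which squares the mean and multiplies the variance proxy
  by at most \<open>1 + \<mu>\<^sup>2\<close> (Hoeffding's lemma caps it at 1 anyway). At an end node reached with
  \<open>z\<close> zeros and \<open>k\<close> ones the coordinates therefore have mean \<open>\<epsilon>^2^z\<close> and variance proxy at
  most \<open>min 1 ((1 + \<epsilon>\<^sup>2)^z / 2^k)\<close>. A Chernoff bound controls one coordinate at a full-space
  node. At a biorthogonal node MD decoding can only fail if some codeword \<open>c \<noteq> 1\<close> has
  \<open>\<langle>c, y\<rangle> \<ge> \<langle>1, y\<rangle>\<close>, i.e. if the coordinates in the at least half of the positions where
  \<open>c = -1\<close> have a nonpositive sum; a union bound over the codewords and a Chernoff bound for each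
  finish the estimate. The choice of \<open>\<tilde>\<epsilon>\<^sub>r\<close> makes both exponents exceed \<open>c'm\<close>.
\<close>

abbreviation E :: "'a pmf \<Rightarrow> ('a \<Rightarrow> real) \<Rightarrow> real" where
  "E p f \<equiv> measure_pmf.expectation p f"

lemma expectation_bind_pmf_finite:
  assumes "finite (set_pmf p)" "\<And>x. x \<in> set_pmf p \<Longrightarrow> finite (set_pmf (f x))"
  shows "E (bind_pmf p f) h = E p (\<lambda>x. E (f x) h)"
proof -
  have "E (bind_pmf p f) h = (\<Sum>a\<in>set_pmf p. pmf p a *\<^sub>R E (f a) h)"
    by (rule pmf_expectation_bind) (use assms in auto)
  also have "\<dots> = E p (\<lambda>x. E (f x) h)"
    by (subst integral_measure_pmf[of "set_pmf p"]) (use assms in auto)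
  finally show ?thesis .
qed

lemma expectation_pmf_mono:
  "finite (set_pmf p) \<Longrightarrow> (\<And>x. x \<in> set_pmf p \<Longrightarrow> f x \<le> g x) \<Longrightarrow> E p f \<le> E p g"
  by (rule integral_mono_AE) (auto simp: AE_measure_pmf_iff intro: integrable_measure_pmf_finite)

lemma expectation_pmf_cong: "(\<And>x. x \<in> set_pmf p \<Longrightarrow> f x = g x) \<Longrightarrow> E p f = E p g"
  by (rule integral_cong_AE) (auto simp: AE_measure_pmf_iff)

lemma expectation_pmf_nonneg: "(\<And>x. x \<in> set_pmf p \<Longrightarrow> 0 \<le> f x) \<Longrightarrow> 0 \<le> E p f"
  by (rule integral_nonneg_AE) (auto simp: AE_measure_pmf_iff)

lemma expectation_pmf_affine:
  assumes "finite (set_pmf p)"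
  shows "E p (\<lambda>y. a * y + b) = a * E p (\<lambda>y. y) + b"
proof -
  have "E p (\<lambda>y. a * y + b) = E p (\<lambda>y. a * y) + E p (\<lambda>y. b)"
    by (rule Bochner_Integration.integral_add) (simp_all add: integrable_measure_pmf_finite assms)
  then show ?thesis by simp
qed

lemma replicate_pmf_Suc_map:
  "replicate_pmf (Suc n) p = bind_pmf p (\<lambda>x. map_pmf (Cons x) (replicate_pmf n p))"
  by (simp add: map_pmf_def)

lemma finite_set_replicate_pmf: "finite (set_pmf p) \<Longrightarrow> finite (set_pmf (replicate_pmf n p))"
  by (induction n) (auto simp: replicate_pmf_Suc_map)

lemma length_in_replicate_pmf: "xs \<in> set_pmf (replicate_pmf n p) \<Longrightarrow> length xs = n"
  by (simp add: set_replicate_pmf)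

lemma replicate_pmf_add_map:
  "replicate_pmf (n + k) p = bind_pmf (replicate_pmf n p) (\<lambda>xs. map_pmf ((@) xs) (replicate_pmf k p))"
  by (simp add: replicate_pmf_distrib map_pmf_def)

lemma replicate_pmf_map2:
  "bind_pmf (replicate_pmf n p) (\<lambda>xs. map_pmf (map2 f xs) (replicate_pmf n q))
     = replicate_pmf n (bind_pmf p (\<lambda>x. map_pmf (f x) q))"
proof (induction n)
  case 0
  then show ?case by (simp add: bind_return_pmf)
next
  case (Suc n)
  let ?R = "replicate_pmf n"
  have "bind_pmf (replicate_pmf (Suc n) p) (\<lambda>xs. map_pmf (map2 f xs) (replicate_pmf (Suc n) q))
      = bind_pmf p (\<lambda>x. bind_pmf q (\<lambda>y. bind_pmf (?R p)
          (\<lambda>xs. map_pmf (\<lambda>ys. f x y # map2 f xs ys) (?R q))))"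
    by (simp add: replicate_pmf_Suc_map map_pmf_def bind_assoc_pmf bind_return_pmf
        bind_commute_pmf[where A = "?R p" and B = q])
  also have "\<dots> = bind_pmf p (\<lambda>x. bind_pmf q (\<lambda>y. map_pmf (Cons (f x y))
                   (bind_pmf (?R p) (\<lambda>xs. map_pmf (map2 f xs) (?R q)))))"
    by (simp add: map_bind_pmf map_pmf_comp o_def)
  also have "\<dots> = replicate_pmf (Suc n) (bind_pmf p (\<lambda>x. map_pmf (f x) q))"
    by (simp only: Suc) (simp add: replicate_pmf_Suc_map map_pmf_def bind_assoc_pmf bind_return_pmf)
  finally show ?case .
qed

lemma expectation_replicate_pmf_prod:
  assumes "finite (set_pmf q)" "S \<subseteq> {..<n}"
  shows "E (replicate_pmf n q) (\<lambda>z. \<Prod>i\<in>S. f (z ! i)) = E q f ^ card S"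
  using assms(2)
proof (induction n arbitrary: S)
  case 0
  then show ?case by simp
next
  case (Suc n)
  define S' where "S' = {i. Suc i \<in> S}"
  have S'_sub: "S' \<subseteq> {..<n}" using Suc.prems by (auto simp: S'_def)
  then have "finite S'" using finite_subset by blast
  have S_eq: "S = (if 0 \<in> S then insert 0 (Suc ` S') else Suc ` S')"
  proof -
    have "i \<in> S \<longleftrightarrow> (i = 0 \<and> 0 \<in> S) \<or> i \<in> Suc ` S'" for i
      by (cases i) (auto simp: S'_def)
    then show ?thesis by (cases "0 \<in> S") (simp_all add: set_eq_iff)
  qed
  have prod_Cons: "(\<Prod>i\<in>S. f ((x # zs) ! i)) = (if 0 \<in> S then f x else 1) * (\<Prod>i\<in>S'. f (zs ! i))"
    for x zs
  proof -
    have "(\<Prod>i\<in>Suc ` S'. f ((x # zs) ! i)) = (\<Prod>i\<in>S'. f (zs ! i))"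
      by (subst prod.reindex) auto
    then show ?thesis using \<open>finite S'\<close> by (subst S_eq) auto
  qed
  have card_S: "card S = (if 0 \<in> S then 1 else 0) + card S'"
    using \<open>finite S'\<close> by (subst S_eq) (auto simp: card_image)
  have "E (replicate_pmf (Suc n) q) (\<lambda>z. \<Prod>i\<in>S. f (z ! i))
      = E q (\<lambda>x. E (replicate_pmf n q) (\<lambda>zs. \<Prod>i\<in>S. f ((x # zs) ! i)))"
    by (simp only: replicate_pmf_Suc_map, subst expectation_bind_pmf_finite)
      (auto simp: assms finite_set_replicate_pmf)
  also have "\<dots> = E q (\<lambda>x. (if 0 \<in> S then f x else 1) * E q f ^ card S')"
    by (simp only: prod_Cons Bochner_Integration.integral_mult_right_zero Suc.IH[OF S'_sub])
  also have "\<dots> = E q f ^ card S"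
    by (simp add: card_S)
  finally show ?case .
qed

definition bsc_pmf :: "real \<Rightarrow> real pmf" where
  "bsc_pmf e = map_pmf (\<lambda>b. if b then 1 else -1) (bernoulli_pmf ((1 + e) / 2))"

lemma set_bsc_pmf: "set_pmf (bsc_pmf e) \<subseteq> {-1, 1}"
  by (auto simp: bsc_pmf_def)

lemma finite_set_bsc_pmf: "finite (set_pmf (bsc_pmf e))"
  using set_bsc_pmf finite_subset by blast

lemma expectation_bsc_pmf:
  assumes "\<bar>e\<bar> \<le> 1"
  shows "E (bsc_pmf e) g = (1 + e) / 2 * g 1 + (1 - e) / 2 * g (-1)"
proof -
  have "E (bsc_pmf e) g = g 1 * ((1 + e) / 2) + g (-1) * (1 - (1 + e) / 2)"
    unfolding bsc_pmf_def integral_map_pmf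
    by (rule integral_bernoulli_pmf[where f = "\<lambda>b. g (if b then 1 else -1)", simplified])
      (use assms in auto)
  then show ?thesis by (simp add: field_simps)
qed

lemma sign_vectors_Suc: "sign_vectors (Suc n) = (\<lambda>(x, xs). x # xs) ` ({-1, 1} \<times> sign_vectors n)"
  by (auto simp: sign_vectors_def length_Suc_conv image_iff)

lemma word_prob_Cons:
  "word_prob e (x # xs) = (if x = -1 then (1 - e) / 2 else (1 + e) / 2) * word_prob e xs"
  unfolding word_prob_def length_Cons prod.lessThan_Suc_shift by simp

lemma expect_eq_replicate_pmf:
  assumes "\<bar>e\<bar> \<le> 1"
  shows "expect e n f = E (replicate_pmf n (bsc_pmf e)) f"
proof (induction n arbitrary: f)
  case 0
  have "sign_vectors 0 = {[]}" by (auto simp: sign_vectors_def)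
  then show ?case by (simp add: expect_def word_prob_def)
next
  case (Suc n)
  have inj: "inj_on (\<lambda>(x, xs). x # xs) ({-1, 1::real} \<times> sign_vectors n)"
    by (auto simp: inj_on_def)
  have "expect e (Suc n) f
      = (\<Sum>(x, xs)\<in>{-1, 1::real} \<times> sign_vectors n. word_prob e (x # xs) * f (x # xs))"
    unfolding expect_def sign_vectors_Suc by (subst sum.reindex[OF inj]) (simp add: case_prod_unfold)
  also have "\<dots> = (\<Sum>x\<in>{-1, 1::real}. \<Sum>xs\<in>sign_vectors n. word_prob e (x # xs) * f (x # xs))"
    by (rule sum.cartesian_product[symmetric])
  also have "\<dots> = (1 + e) / 2 * expect e n (\<lambda>xs. f (1 # xs))
                + (1 - e) / 2 * expect e n (\<lambda>xs. f ((-1) # xs))"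
    by (simp add: word_prob_Cons expect_def sum_distrib_left mult.assoc)
  also have "\<dots> = E (bsc_pmf e) (\<lambda>x. E (replicate_pmf n (bsc_pmf e)) (\<lambda>xs. f (x # xs)))"
    using assms by (simp add: expectation_bsc_pmf Suc)
  also have "\<dots> = E (replicate_pmf (Suc n) (bsc_pmf e)) f"
    by (simp only: replicate_pmf_Suc_map, subst expectation_bind_pmf_finite)
      (auto simp: finite_set_bsc_pmf finite_set_replicate_pmf)
  finally show ?case .
qed

section \<open>The transform of an i.i.d. word\<close>

definition half_step_pmf :: "bool \<Rightarrow> real pmf \<Rightarrow> real pmf" where
  "half_step_pmf b p = bind_pmf p (\<lambda>x. map_pmf (\<lambda>y. if b then (x + y) / 2 else x * y) p)"

fun transf_pmf :: "real pmf \<Rightarrow> bool list \<Rightarrow> real pmf" where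
  "transf_pmf p [] = p"
| "transf_pmf p (b # bs) = transf_pmf (half_step_pmf b p) bs"

lemma map_half_step_replicate_pmf:
  "map_pmf (half_step b) (replicate_pmf (n + n) p) = replicate_pmf n (half_step_pmf b p)"
proof -
  have "map_pmf (half_step b) (replicate_pmf (n + n) p)
      = bind_pmf (replicate_pmf n p) (\<lambda>xs. map_pmf (\<lambda>ys. half_step b (xs @ ys)) (replicate_pmf n p))"
    by (simp add: replicate_pmf_add_map map_bind_pmf map_pmf_comp o_def)
  also have "\<dots> = bind_pmf (replicate_pmf n p)
      (\<lambda>xs. map_pmf (map2 (\<lambda>x y. if b then (x + y) / 2 else x * y) xs) (replicate_pmf n p))"
    by (intro bind_pmf_cong refl map_pmf_cong) (auto simp: half_step_def length_in_replicate_pmf)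
  also have "\<dots> = replicate_pmf n (half_step_pmf b p)"
    by (simp add: replicate_pmf_map2 half_step_pmf_def)
  finally show ?thesis .
qed

lemma map_transf_replicate_pmf:
  "map_pmf (\<lambda>ys. transf ys xi) (replicate_pmf (2 ^ length xi * n) p) = replicate_pmf n (transf_pmf p xi)"
proof (induction xi arbitrary: p)
  case Nil
  then show ?case by simp
next
  case (Cons b bs)
  have len: "2 ^ length (b # bs) * n = 2 ^ length bs * n + 2 ^ length bs * n" by simp
  have "map_pmf (\<lambda>ys. transf ys (b # bs)) (replicate_pmf (2 ^ length (b # bs) * n) p)
      = map_pmf (\<lambda>ys. transf ys bs)
          (map_pmf (half_step b) (replicate_pmf (2 ^ length bs * n + 2 ^ length bs * n) p))"
    by (simp only: len map_pmf_comp transf.simps)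
  also have "\<dots> = replicate_pmf n (transf_pmf p (b # bs))"
    by (simp only: map_half_step_replicate_pmf Cons.IH transf_pmf.simps)
  finally show ?case .
qed

lemma expect_transf:
  assumes "\<bar>e\<bar> \<le> 1" "length xi \<le> m"
  shows "expect e (2 ^ m) (\<lambda>ys. G (transf ys xi))
       = E (replicate_pmf (2 ^ (m - length xi)) (transf_pmf (bsc_pmf e) xi)) G"
proof -
  have m: "(2::nat) ^ m = 2 ^ length xi * 2 ^ (m - length xi)"
    using assms(2) by (simp flip: power_add)
  have "expect e (2 ^ m) (\<lambda>ys. G (transf ys xi))
      = E (map_pmf (\<lambda>ys. transf ys xi) (replicate_pmf (2 ^ length xi * 2 ^ (m - length xi)) (bsc_pmf e))) G"
    using assms(1) by (simp only: m expect_eq_replicate_pmf integral_map_pmf)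
  then show ?thesis by (simp only: map_transf_replicate_pmf)
qed

section \<open>Sub-Gaussian symbols\<close>

definition subgaussian :: "real pmf \<Rightarrow> real \<Rightarrow> real \<Rightarrow> bool" where
  "subgaussian p \<mu> v \<longleftrightarrow> (\<forall>s. E p (\<lambda>x. exp (s * (x - \<mu>))) \<le> exp (s\<^sup>2 * v / 2))"

definition unit_subgaussian :: "real pmf \<Rightarrow> real \<Rightarrow> real \<Rightarrow> bool" where
  "unit_subgaussian p \<mu> v \<longleftrightarrow> finite (set_pmf p) \<and> set_pmf p \<subseteq> {-1..1} \<and>
     E p (\<lambda>x. x) = \<mu> \<and> 0 \<le> v \<and> subgaussian p \<mu> v"

lemma hoeffding_mgf_unit_interval:
  fixes f :: "real \<Rightarrow> real"
  assumes "finite (set_pmf p)" "\<And>x. x \<in> set_pmf p \<Longrightarrow> f x \<in> {-1..1}" "l > 0"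
  shows "E p (\<lambda>x. exp (l * (f x - E p f))) \<le> exp (l\<^sup>2 / 2)"
proof -
  interpret interval_bounded_random_variable "measure_pmf p" f "-1" 1
    by unfold_locales (use assms(2) in \<open>simp_all add: AE_measure_pmf_iff\<close>)
  have "ennreal (E p (\<lambda>x. exp (l * (f x - E p f))))
      = (\<integral>\<^sup>+x. ennreal (exp (l * (f x - E p f))) \<partial>measure_pmf p)"
    by (rule nn_integral_eq_integral[symmetric]) (simp_all add: integrable_measure_pmf_finite assms(1))
  also have "\<dots> \<le> ennreal (exp (l\<^sup>2 * (1 - -1)\<^sup>2 / 8))"
    by (rule Hoeffdings_lemma_nn_integral[OF assms(3)])
  finally show ?thesis by (subst (asm) ennreal_le_iff) simp_all
qed

lemma subgaussian_unit_interval: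
  assumes "finite (set_pmf p)" "set_pmf p \<subseteq> {-1..1}"
  shows "subgaussian p (E p (\<lambda>x. x)) 1"
  unfolding subgaussian_def
proof
  fix s :: real
  consider "s > 0" | "s = 0" | "s < 0" by linarith
  then show "E p (\<lambda>x. exp (s * (x - E p (\<lambda>x. x)))) \<le> exp (s\<^sup>2 * 1 / 2)"
  proof cases
    case 1
    have "E p (\<lambda>x. exp (s * (x - E p (\<lambda>x. x)))) \<le> exp (s\<^sup>2 / 2)"
      by (rule hoeffding_mgf_unit_interval) (use assms 1 in auto)
    then show ?thesis by simp
  next
    case 3
    have "E p (\<lambda>x. exp ((-s) * (-x - E p (\<lambda>x. -x)))) \<le> exp ((-s)\<^sup>2 / 2)"
      by (rule hoeffding_mgf_unit_interval) (use assms 3 in auto)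
    then show ?thesis by (simp add: algebra_simps)
  qed simp
qed

lemma finite_set_half_step_pmf: "finite (set_pmf p) \<Longrightarrow> finite (set_pmf (half_step_pmf b p))"
  by (simp add: half_step_pmf_def)

lemma set_half_step_pmf_unit_interval:
  assumes "set_pmf p \<subseteq> {-1..1}"
  shows "set_pmf (half_step_pmf b p) \<subseteq> {-1..1}"
proof
  fix z assume "z \<in> set_pmf (half_step_pmf b p)"
  then obtain x y where "x \<in> set_pmf p" "y \<in> set_pmf p" "z = (if b then (x + y) / 2 else x * y)"
    unfolding half_step_pmf_def by (simp only: set_bind_pmf set_map_pmf) blast
  moreover from this have "\<bar>x\<bar> \<le> 1" "\<bar>y\<bar> \<le> 1" using assms by fastforce+
  ultimately have "\<bar>z\<bar> \<le> 1" by (auto simp: abs_mult mult_le_one)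
  then show "z \<in> {-1..1}" by auto
qed

lemma expectation_half_step_pmf:
  "finite (set_pmf p) \<Longrightarrow>
     E (half_step_pmf b p) h = E p (\<lambda>x. E p (\<lambda>y. h (if b then (x + y) / 2 else x * y)))"
  unfolding half_step_pmf_def by (subst expectation_bind_pmf_finite) simp_all

lemma unit_subgaussian_average:
  assumes "unit_subgaussian p \<mu> v"
  shows "unit_subgaussian (half_step_pmf True p) \<mu> (v / 2)"
proof -
  from assms have fin: "finite (set_pmf p)" and bd: "set_pmf p \<subseteq> {-1..1}"
    and mean: "E p (\<lambda>x. x) = \<mu>" and "0 \<le> v" and mgf: "\<And>s. E p (\<lambda>x. exp (s * (x - \<mu>))) \<le> exp (s\<^sup>2 * v / 2)"
    unfolding unit_subgaussian_def subgaussian_def by auto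
  have "E (half_step_pmf True p) (\<lambda>z. z) = E p (\<lambda>x. E p (\<lambda>y. (1/2) * y + x / 2))"
    using fin by (simp add: expectation_half_step_pmf add_divide_distrib add.commute)
  also have "\<dots> = E p (\<lambda>x. (1/2) * x + \<mu> / 2)"
  proof -
    have "E p (\<lambda>y. (1/2) * y + x / 2) = (1/2) * x + \<mu> / 2" for x
      using expectation_pmf_affine[OF fin, of "1/2" "x/2"] mean by simp
    then show ?thesis by simp
  qed
  also have "\<dots> = (1/2) * \<mu> + \<mu> / 2"
    by (metis expectation_pmf_affine fin mean)
  also have "\<dots> = \<mu>" by simp
  finally have mean': "E (half_step_pmf True p) (\<lambda>z. z) = \<mu>" .
  have "E (half_step_pmf True p) (\<lambda>z. exp (s * (z - \<mu>))) \<le> exp (s\<^sup>2 * (v / 2) / 2)" for s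
  proof -
    define A where "A = E p (\<lambda>y. exp ((s/2) * (y - \<mu>)))"
    have "E (half_step_pmf True p) (\<lambda>z. exp (s * (z - \<mu>)))
        = E p (\<lambda>x. E p (\<lambda>y. exp ((s/2) * (x - \<mu>)) * exp ((s/2) * (y - \<mu>))))"
      using fin by (simp add: expectation_half_step_pmf exp_add[symmetric] algebra_simps
          diff_divide_distrib add_divide_distrib)
    also have "\<dots> = A * A" unfolding A_def by simp
    also have "\<dots> \<le> exp ((s/2)\<^sup>2 * v / 2) * exp ((s/2)\<^sup>2 * v / 2)"
      using mgf[of "s/2"] by (intro mult_mono) (auto simp: A_def intro!: expectation_pmf_nonneg)
    also have "\<dots> = exp (s\<^sup>2 * (v / 2) / 2)"
      by (simp add: exp_add[symmetric] power2_eq_square field_simps)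
    finally show ?thesis .
  qed
  then show ?thesis
    using finite_set_half_step_pmf[OF fin] set_half_step_pmf_unit_interval[OF bd] mean' \<open>0 \<le> v\<close>
    unfolding unit_subgaussian_def subgaussian_def by auto
qed

lemma subgaussian_product:
  assumes "unit_subgaussian p \<mu> v"
  shows "subgaussian (half_step_pmf False p) (\<mu>\<^sup>2) (v * (1 + \<mu>\<^sup>2))"
  unfolding subgaussian_def
proof
  fix s :: real
  from assms have fin: "finite (set_pmf p)" and bd: "set_pmf p \<subseteq> {-1..1}"
    and "0 \<le> v" and mgf: "\<And>s. E p (\<lambda>x. exp (s * (x - \<mu>))) \<le> exp (s\<^sup>2 * v / 2)"
    unfolding unit_subgaussian_def subgaussian_def by auto
  text \<open>Write \<open>xy - \<mu>\<^sup>2 = \<mu> (x - \<mu>) + x (y - \<mu>)\<close> and integrate out \<open>y\<close> first, using \<open>x\<^sup>2 \<le> 1\<close>.\<close>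
  have "E (half_step_pmf False p) (\<lambda>z. exp (s * (z - \<mu>\<^sup>2)))
      = E p (\<lambda>x. E p (\<lambda>y. exp ((s * \<mu>) * (x - \<mu>)) * exp ((s * x) * (y - \<mu>))))"
    using fin by (simp add: expectation_half_step_pmf exp_add[symmetric] algebra_simps power2_eq_square)
  also have "\<dots> = E p (\<lambda>x. exp ((s * \<mu>) * (x - \<mu>)) * E p (\<lambda>y. exp ((s * x) * (y - \<mu>))))"
    by simp
  also have "\<dots> \<le> E p (\<lambda>x. exp ((s * \<mu>) * (x - \<mu>)) * exp (s\<^sup>2 * v / 2))"
  proof (rule expectation_pmf_mono[OF fin])
    fix x assume "x \<in> set_pmf p"
    then have "\<bar>x\<bar> \<le> 1" using bd by fastforce
    then have "x\<^sup>2 \<le> 1" by (simp add: abs_square_le_1)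
    then have "x\<^sup>2 * v \<le> v" using \<open>0 \<le> v\<close> by (simp add: mult_left_le_one_le)
    then have "(s * x)\<^sup>2 * v / 2 \<le> s\<^sup>2 * v / 2"
      by (simp add: power_mult_distrib mult.assoc mult_left_mono)
    then have "E p (\<lambda>y. exp ((s * x) * (y - \<mu>))) \<le> exp (s\<^sup>2 * v / 2)"
      using mgf[of "s * x"] by (meson exp_le_cancel_iff order_trans)
    then show "exp ((s * \<mu>) * (x - \<mu>)) * E p (\<lambda>y. exp ((s * x) * (y - \<mu>)))
             \<le> exp ((s * \<mu>) * (x - \<mu>)) * exp (s\<^sup>2 * v / 2)"
      by (simp add: mult_left_mono)
  qed
  also have "\<dots> = E p (\<lambda>x. exp ((s * \<mu>) * (x - \<mu>))) * exp (s\<^sup>2 * v / 2)" by simp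
  also have "\<dots> \<le> exp ((s * \<mu>)\<^sup>2 * v / 2) * exp (s\<^sup>2 * v / 2)"
    using mgf[of "s * \<mu>"] by (simp add: mult_right_mono)
  also have "\<dots> = exp (s\<^sup>2 * (v * (1 + \<mu>\<^sup>2)) / 2)"
    by (simp add: exp_add[symmetric] power_mult_distrib field_simps)
  finally show "E (half_step_pmf False p) (\<lambda>z. exp (s * (z - \<mu>\<^sup>2))) \<le> exp (s\<^sup>2 * (v * (1 + \<mu>\<^sup>2)) / 2)" .
qed

lemma unit_subgaussian_product:
  assumes "unit_subgaussian p \<mu> v"
  shows "unit_subgaussian (half_step_pmf False p) (\<mu>\<^sup>2) (min 1 (v * (1 + \<mu>\<^sup>2)))"
proof -
  from assms have fin: "finite (set_pmf p)" and bd: "set_pmf p \<subseteq> {-1..1}"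
    and mean: "E p (\<lambda>x. x) = \<mu>" and "0 \<le> v"
    unfolding unit_subgaussian_def by auto
  have fin': "finite (set_pmf (half_step_pmf False p))"
    using fin by (rule finite_set_half_step_pmf)
  have bd': "set_pmf (half_step_pmf False p) \<subseteq> {-1..1}"
    using bd by (rule set_half_step_pmf_unit_interval)
  have mean': "E (half_step_pmf False p) (\<lambda>z. z) = \<mu>\<^sup>2"
    using fin by (simp add: expectation_half_step_pmf mean power2_eq_square)
  have "subgaussian (half_step_pmf False p) (\<mu>\<^sup>2) 1"
    using subgaussian_unit_interval[OF fin' bd'] mean' by simp
  with subgaussian_product[OF assms]
  have "subgaussian (half_step_pmf False p) (\<mu>\<^sup>2) (min 1 (v * (1 + \<mu>\<^sup>2)))"
    by (cases "v * (1 + \<mu>\<^sup>2) \<le> 1") (simp_all add: min_def)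
  then show ?thesis
    using fin' bd' mean' \<open>0 \<le> v\<close> by (simp add: unit_subgaussian_def)
qed

lemma unit_subgaussian_bsc_pmf:
  assumes "0 \<le> e" "e \<le> 1"
  shows "unit_subgaussian (bsc_pmf e) e 1"
proof -
  have bd: "set_pmf (bsc_pmf e) \<subseteq> {-1..1}" using set_bsc_pmf by fastforce
  have mean: "E (bsc_pmf e) (\<lambda>x. x) = e" using assms by (simp add: expectation_bsc_pmf field_simps)
  show ?thesis
    using subgaussian_unit_interval[OF finite_set_bsc_pmf bd] finite_set_bsc_pmf bd mean
    by (simp add: unit_subgaussian_def)
qed

lemma unit_subgaussian_transf_pmf:
  assumes "unit_subgaussian p \<mu> v" "0 \<le> \<mu>" "\<mu> \<le> 1" "0 < v"
  shows "\<exists>v'. unit_subgaussian (transf_pmf p xi) (\<mu> ^ 2 ^ count_list xi False) v' \<and> 0 < v' \<and>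
           v' \<le> v * (1 + \<mu>\<^sup>2) ^ count_list xi False / 2 ^ count_list xi True \<and> (v \<le> 1 \<longrightarrow> v' \<le> 1)"
  using assms
proof (induction xi arbitrary: p \<mu> v)
  case Nil
  then show ?case by auto
next
  case (Cons b bs)
  show ?case
  proof (cases b)
    case True
    obtain v' where "unit_subgaussian (transf_pmf (half_step_pmf True p) bs) (\<mu> ^ 2 ^ count_list bs False) v'"
      "0 < v'" "v' \<le> (v / 2) * (1 + \<mu>\<^sup>2) ^ count_list bs False / 2 ^ count_list bs True"
      "v / 2 \<le> 1 \<longrightarrow> v' \<le> 1"
      using Cons.IH[OF unit_subgaussian_average[OF Cons.prems(1)] Cons.prems(2,3)] Cons.prems(4) by auto
    with True show ?thesis by (intro exI[of _ v']) auto
  next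
    case False
    define w where "w = min 1 (v * (1 + \<mu>\<^sup>2))"
    have w: "0 < w" "w \<le> 1" "w \<le> v * (1 + \<mu>\<^sup>2)"
      using Cons.prems(4) by (auto simp: w_def add_pos_nonneg)
    have \<mu>2: "0 \<le> \<mu>\<^sup>2" "\<mu>\<^sup>2 \<le> 1" using Cons.prems(2,3) by (auto simp: power_le_one)
    obtain v' where v': "unit_subgaussian (transf_pmf (half_step_pmf False p) bs) ((\<mu>\<^sup>2) ^ 2 ^ count_list bs False) v'"
      "0 < v'" "v' \<le> w * (1 + (\<mu>\<^sup>2)\<^sup>2) ^ count_list bs False / 2 ^ count_list bs True" "v' \<le> 1"
      using Cons.IH[OF unit_subgaussian_product[OF Cons.prems(1), folded w_def] \<mu>2 w(1)] w(2) by auto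
    have "(\<mu>\<^sup>2)\<^sup>2 \<le> \<mu>\<^sup>2" using \<mu>2 by (simp add: power2_eq_square mult_left_le_one_le)
    then have "w * (1 + (\<mu>\<^sup>2)\<^sup>2) ^ count_list bs False \<le> (v * (1 + \<mu>\<^sup>2)) * (1 + \<mu>\<^sup>2) ^ count_list bs False"
      using w by (intro mult_mono power_mono) auto
    then have "v' \<le> v * (1 + \<mu>\<^sup>2) ^ count_list (b # bs) False / 2 ^ count_list (b # bs) True"
      using v'(3) False by (simp add: divide_right_mono mult.assoc order_trans)
    moreover have "(\<mu>\<^sup>2) ^ 2 ^ count_list bs False = \<mu> ^ 2 ^ count_list (b # bs) False"
      using False by (simp add: power_mult[symmetric] mult.commute)
    ultimately show ?thesis using v' w False by (intro exI[of _ v']) auto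
  qed
qed

lemma expectation_exp_neg_le:
  assumes "unit_subgaussian p \<mu> v" "0 < v"
  shows "E p (\<lambda>x. exp (-(\<mu> / v) * x)) \<le> exp (-(\<mu>\<^sup>2 / (2 * v)))"
proof -
  have mgf: "E p (\<lambda>x. exp (-(\<mu> / v) * (x - \<mu>))) \<le> exp ((-(\<mu> / v))\<^sup>2 * v / 2)"
    using assms(1) unfolding unit_subgaussian_def subgaussian_def by blast
  have "E p (\<lambda>x. exp (-(\<mu> / v) * x)) = E p (\<lambda>x. exp (-(\<mu> / v) * (x - \<mu>)) * exp (-(\<mu> / v) * \<mu>))"
    by (intro expectation_pmf_cong) (simp add: exp_add[symmetric] field_simps diff_divide_distrib)
  also have "\<dots> = E p (\<lambda>x. exp (-(\<mu> / v) * (x - \<mu>))) * exp (-(\<mu> / v) * \<mu>)"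
    by simp
  also have "\<dots> \<le> exp ((-(\<mu> / v))\<^sup>2 * v / 2) * exp (-(\<mu> / v) * \<mu>)"
    using mgf by simp
  also have "\<dots> = exp (-(\<mu>\<^sup>2 / (2 * v)))"
    using assms(2) by (simp add: exp_add[symmetric] power2_eq_square field_simps)
  finally show ?thesis .
qed

section \<open>The biorthogonal code\<close>

definition common_bits :: "nat \<Rightarrow> nat \<Rightarrow> nat \<Rightarrow> nat" where
  "common_bits M a i = card {j. j < M \<and> bit a j \<and> bit i j}"

lemma card_less_Suc_split:
  "card {j. j < Suc M \<and> P j} = (if P 0 then 1 else 0) + card {j. j < M \<and> P (Suc j)}"
proof -
  have "{j. j < Suc M \<and> P j} = (if P 0 then {0} else {}) \<union> Suc ` {j. j < M \<and> P (Suc j)}"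
  proof -
    have "i \<in> {j. j < Suc M \<and> P j} \<longleftrightarrow> i \<in> (if P 0 then {0} else {}) \<union> Suc ` {j. j < M \<and> P (Suc j)}" for i
      by (cases i) auto
    then show ?thesis by blast
  qed
  then show ?thesis by (simp add: card_Un_disjoint card_image)
qed

lemma common_bits_Suc:
  "common_bits (Suc M) a i = (if odd a \<and> odd i then 1 else 0) + common_bits M (a div 2) (i div 2)"
  unfolding common_bits_def by (subst card_less_Suc_split) (simp add: bit_0 bit_Suc)

lemma sum_lessThan_double: "(\<Sum>i<2 * (n::nat). f i) = (\<Sum>i<n. f (2 * i) + f (2 * i + 1) :: real)"
  by (induction n) (simp_all add: algebra_simps)

lemma sum_character_eq_0:
  "a < 2 ^ M \<Longrightarrow> a \<noteq> 0 \<Longrightarrow> (\<Sum>i<2 ^ M. (-1::real) ^ common_bits M a i) = 0"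
proof (induction M arbitrary: a)
  case 0
  then show ?case by simp
next
  case (Suc M)
  have "(\<Sum>i<2 ^ Suc M. (-1::real) ^ common_bits (Suc M) a i)
      = (\<Sum>i<2 ^ M. (1 + (if odd a then -1 else 1)) * (-1::real) ^ common_bits M (a div 2) i)"
    by (simp add: sum_lessThan_double common_bits_Suc algebra_simps)
  also have "\<dots> = 0"
  proof (cases "odd a")
    case False
    then have "a div 2 \<noteq> 0" "a div 2 < 2 ^ M" using Suc.prems by auto
    then show ?thesis using False Suc.IH[of "a div 2"] by (simp flip: sum_distrib_left)
  qed simp
  finally show ?case .
qed

definition rm1_entry :: "nat \<Rightarrow> nat \<Rightarrow> real \<Rightarrow> nat \<Rightarrow> real" where
  "rm1_entry M a s i = s * (-1) ^ common_bits M a i"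

definition rm1_word :: "nat \<Rightarrow> nat \<Rightarrow> real \<Rightarrow> real list" where
  "rm1_word M a s = map (rm1_entry M a s) [0..<2 ^ M]"

definition minus_positions :: "nat \<Rightarrow> nat \<Rightarrow> real \<Rightarrow> nat set" where
  "minus_positions M a s = {i. i < 2 ^ M \<and> rm1_entry M a s i = -1}"

text \<open>The pair \<open>(0, 1)\<close> indexes the all-ones word.\<close>
definition other_codeword_indices :: "nat \<Rightarrow> (nat \<times> real) set" where
  "other_codeword_indices M = ({..<2 ^ M} \<times> {1, -1}) - {(0, 1)}"

lemma rm1_eq_image: "rm1 M = (\<lambda>(a, s). rm1_word M a s) ` ({..<2 ^ M} \<times> {1, -1})"
  unfolding rm1_def rm1_word_def rm1_entry_def common_bits_def by (auto simp: image_iff)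

lemma rm1_word_0_1: "rm1_word M 0 1 = replicate (2 ^ M) 1"
  by (rule nth_equalityI) (simp_all add: rm1_word_def rm1_entry_def common_bits_def)

lemma rm1_entry_cases: "s = 1 \<or> s = -1 \<Longrightarrow> rm1_entry M a s i = 1 \<or> rm1_entry M a s i = -1"
  by (cases "even (common_bits M a i)") (auto simp: rm1_entry_def)

lemma inner_map_upt: "length z = N \<Longrightarrow> Defs.inner (map h [0..<N]) z = (\<Sum>i<N. h i * z ! i)"
proof -
  assume "length z = N"
  then have "map2 (*) (map h [0..<N]) z = map (\<lambda>i. h i * z ! i) [0..<N]"
    by (intro nth_equalityI) simp_all
  then show ?thesis
    unfolding Defs.inner_def by (simp add: sum_set_upt_conv_sum_list_nat[symmetric] atLeast0LessThan)
qed

lemma inner_rm1_word_diff: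
  assumes "length z = 2 ^ M" "s = 1 \<or> s = -1"
  shows "Defs.inner (rm1_word M a s) z - Defs.inner (replicate (2 ^ M) 1) z
       = -2 * (\<Sum>i\<in>minus_positions M a s. z ! i)"
proof -
  have "Defs.inner (rm1_word M a s) z - Defs.inner (replicate (2 ^ M) 1) z
      = (\<Sum>i<2 ^ M. (rm1_entry M a s i - 1) * z ! i)"
    unfolding rm1_word_0_1[symmetric]
    by (simp add: rm1_word_def inner_map_upt assms rm1_entry_def common_bits_def sum_subtractf algebra_simps)
  also have "\<dots> = (\<Sum>i<2 ^ M. if rm1_entry M a s i = -1 then -2 * z ! i else 0)"
    by (intro sum.cong refl) (use rm1_entry_cases[OF assms(2)] in auto)
  also have "\<dots> = (\<Sum>i\<in>minus_positions M a s. -2 * z ! i)"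
    by (simp add: sum.If_cases minus_positions_def Int_def conj_commute)
  finally show ?thesis by (simp add: sum_distrib_left)
qed

text \<open>Orthogonality of the nonconstant characters: any other codeword is \<open>-1\<close> on at least half
  of the positions.\<close>
lemma card_minus_positions:
  assumes "(a, s) \<in> other_codeword_indices M"
  shows "2 ^ M \<le> 2 * card (minus_positions M a s)"
proof (cases "a = 0")
  case True
  then have "minus_positions M a s = {..<2 ^ M}"
    using assms by (auto simp: other_codeword_indices_def minus_positions_def rm1_entry_def common_bits_def)
  then show ?thesis by simp
next
  case False
  have a: "a < 2 ^ M" and s: "s = 1 \<or> s = -1" using assms by (auto simp: other_codeword_indices_def)
  have sub: "minus_positions M a s \<subseteq> {..<2 ^ M}" by (auto simp: minus_positions_def)
  have "0 = (\<Sum>i<2 ^ M. rm1_entry M a s i)"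
    using sum_character_eq_0[OF a False] by (simp add: rm1_entry_def flip: sum_distrib_left)
  also have "\<dots> = (\<Sum>i<2 ^ M. 1 - (if i \<in> minus_positions M a s then 2 else 0))"
    by (intro sum.cong refl) (use rm1_entry_cases[OF s] in \<open>auto simp: minus_positions_def\<close>)
  also have "\<dots> = 2 ^ M - 2 * real (card (minus_positions M a s))"
    using sub by (simp add: sum_subtractf sum.If_cases Int_absorb1)
  finally have "real (2 ^ M) = 2 * real (card (minus_positions M a s))" by simp
  then show ?thesis by linarith
qed

lemma card_other_codeword_indices: "card (other_codeword_indices M) = 2 * 2 ^ M - 1"
proof -
  have "card ({..<(2::nat) ^ M} \<times> {1, -1::real}) = 2 * 2 ^ M" by (simp add: card_cartesian_product)
  then show ?thesis unfolding other_codeword_indices_def by (subst card_Diff_singleton) auto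
qed

lemma md_err_biorth_le_1: "md_err_biorth M z \<le> 1"
  by (simp add: md_err_biorth_def Let_def)

lemma rm1_other_word:
  assumes "c \<in> rm1 M" "c \<noteq> replicate (2 ^ M) 1"
  obtains a s where "(a, s) \<in> other_codeword_indices M" "c = rm1_word M a s"
proof -
  obtain p where "p \<in> {..<2 ^ M} \<times> {1, -1}" "c = (\<lambda>(a, s). rm1_word M a s) p"
    using assms(1) unfolding rm1_eq_image by (rule imageE)
  then obtain a s where as: "(a, s) \<in> {..<2 ^ M} \<times> {1, -1}" and c: "c = rm1_word M a s"
    by (cases p) simp
  have "(a, s) \<noteq> (0, 1)"
  proof
    assume "(a, s) = (0, 1)"
    then show False using assms(2) c rm1_word_0_1[of M] by simp
  qed
  with as have "(a, s) \<in> other_codeword_indices M" by (simp add: other_codeword_indices_def)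
  from this c show ?thesis by (rule that)
qed

lemma md_err_biorth_competitor:
  assumes "length z = 2 ^ M" "md_err_biorth M z \<noteq> 0"
  obtains a s where "(a, s) \<in> other_codeword_indices M" "(\<Sum>i\<in>minus_positions M a s. z ! i) \<le> 0"
proof -
  define S where "S = {c \<in> rm1 M. \<forall>c'\<in>rm1 M. Defs.inner c' z \<le> Defs.inner c z}"
  define ones where "ones = replicate (2 ^ M) (1::real)"
  have fin: "finite (rm1 M)" by (simp add: rm1_eq_image)
  have ones_rm1: "ones \<in> rm1 M"
    unfolding rm1_eq_image ones_def rm1_word_0_1[symmetric] by (auto simp: image_iff)
  have "md_err_biorth M z = 1 - (if ones \<in> S then 1 / card S else 0)"
    by (simp add: md_err_biorth_def S_def ones_def Let_def)
  with assms(2) have not_unique: "\<not> (ones \<in> S \<and> card S = 1)" by auto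
  obtain c where "c \<in> S" "c \<noteq> ones"
  proof (cases "ones \<in> S")
    case True
    with not_unique have "S \<noteq> {ones}" by auto
    with True have "\<exists>c\<in>S. c \<noteq> ones" by blast
    then show ?thesis using that by blast
  next
    case False
    define mx where "mx = Max ((\<lambda>c. Defs.inner c z) ` rm1 M)"
    have "mx \<in> (\<lambda>c. Defs.inner c z) ` rm1 M"
      unfolding mx_def using fin ones_rm1 by (intro Max_in) auto
    then obtain c where c: "c \<in> rm1 M" "Defs.inner c z = mx" by blast
    have "\<forall>c'\<in>rm1 M. Defs.inner c' z \<le> Defs.inner c z"
      unfolding c(2) mx_def using fin by (auto intro!: Max_ge)
    with c(1) have "c \<in> S" by (simp add: S_def)
    with False show ?thesis using that by blast
  qed
  from \<open>c \<in> S\<close> have "c \<in> rm1 M" by (simp add: S_def)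
  then obtain a s where other: "(a, s) \<in> other_codeword_indices M" and c: "c = rm1_word M a s"
    using \<open>c \<noteq> ones\<close> unfolding ones_def by (rule rm1_other_word)
  have "Defs.inner ones z \<le> Defs.inner c z"
    using \<open>c \<in> S\<close> ones_rm1 by (simp add: S_def)
  moreover have "s = 1 \<or> s = -1" using other by (auto simp: other_codeword_indices_def)
  ultimately have "(\<Sum>i\<in>minus_positions M a s. z ! i) \<le> 0"
    using inner_rm1_word_diff[OF assms(1), of s a] unfolding c ones_def by linarith
  with other show ?thesis by (rule that)
qed

lemma md_err_biorth_le_sum_exp:
  assumes "length z = 2 ^ M" "0 \<le> t"
  shows "md_err_biorth M z
       \<le> (\<Sum>(a, s)\<in>other_codeword_indices M. exp (-t * (\<Sum>i\<in>minus_positions M a s. z ! i)))"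
proof (cases "md_err_biorth M z = 0")
  case True
  then show ?thesis by (simp add: sum_nonneg split_beta)
next
  case False
  then obtain a s where as: "(a, s) \<in> other_codeword_indices M"
    and neg: "(\<Sum>i\<in>minus_positions M a s. z ! i) \<le> 0"
    using md_err_biorth_competitor[OF assms(1)] by blast
  have "0 \<le> -t * (\<Sum>i\<in>minus_positions M a s. z ! i)"
    using neg assms(2) by (simp add: mult_nonneg_nonpos)
  then have "md_err_biorth M z \<le> exp (-t * (\<Sum>i\<in>minus_positions M a s. z ! i))"
    using md_err_biorth_le_1 by (meson one_le_exp_iff order_trans)
  also have "\<dots> \<le> (\<Sum>(a, s)\<in>other_codeword_indices M. exp (-t * (\<Sum>i\<in>minus_positions M a s. z ! i)))"
    using member_le_sum[OF as, of "\<lambda>(a, s). exp (-t * (\<Sum>i\<in>minus_positions M a s. z ! i))"]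
    by (simp add: split_beta other_codeword_indices_def)
  finally show ?thesis .
qed

lemma coord_err_le_exp: "0 \<le> t \<Longrightarrow> coord_err x \<le> exp (-t * x)"
  by (auto simp: coord_err_def mult_nonneg_nonpos)

lemma expectation_coord_err_le:
  assumes "unit_subgaussian p \<mu> v" "0 < v" "0 \<le> \<mu>" "\<sigma> < n"
  shows "E (replicate_pmf n p) (\<lambda>z. coord_err (z ! \<sigma>)) \<le> exp (-(\<mu>\<^sup>2 / (2 * v)))"
proof -
  have fin: "finite (set_pmf p)" using assms(1) by (simp add: unit_subgaussian_def)
  have "E (replicate_pmf n p) (\<lambda>z. coord_err (z ! \<sigma>)) = E (replicate_pmf n p) (\<lambda>z. \<Prod>i\<in>{\<sigma>}. coord_err (z ! i))"
    by simp
  also have "\<dots> = E p coord_err"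
    using expectation_replicate_pmf_prod[OF fin, of "{\<sigma>}" n coord_err] assms(4) by simp
  also have "\<dots> \<le> E p (\<lambda>x. exp (-(\<mu> / v) * x))"
    using assms by (intro expectation_pmf_mono[OF fin] coord_err_le_exp) simp
  also have "\<dots> \<le> exp (-(\<mu>\<^sup>2 / (2 * v)))"
    by (rule expectation_exp_neg_le[OF assms(1,2)])
  finally show ?thesis .
qed

lemma expectation_md_err_biorth_le:
  assumes "unit_subgaussian p \<mu> v" "0 < v" "0 \<le> \<mu>"
  shows "E (replicate_pmf (2 ^ Suc g) p) (md_err_biorth (Suc g))
       \<le> (2 * 2 ^ Suc g - 1) * exp (-(2 ^ g * \<mu>\<^sup>2 / (2 * v)))"
proof -
  define M where "M = Suc g"
  define t where "t = \<mu> / v"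
  define q where "q = exp (-(\<mu>\<^sup>2 / (2 * v)))"
  let ?W = "replicate_pmf (2 ^ M) p"
  have fin: "finite (set_pmf p)" using assms(1) by (simp add: unit_subgaussian_def)
  have finW: "finite (set_pmf ?W)" by (simp add: finite_set_replicate_pmf fin)
  have sub: "minus_positions M a s \<subseteq> {..<2 ^ M}" for a s by (auto simp: minus_positions_def)
  have q: "0 \<le> q" "q \<le> 1" using assms by (auto simp: q_def)
  have mgf: "E p (\<lambda>x. exp (-t * x)) \<le> q"
    unfolding t_def q_def by (rule expectation_exp_neg_le[OF assms(1,2)])
  have "0 \<le> t" using assms(2,3) by (simp add: t_def)
  then have "E ?W (md_err_biorth M)
      \<le> E ?W (\<lambda>z. \<Sum>(a, s)\<in>other_codeword_indices M. exp (-t * (\<Sum>i\<in>minus_positions M a s. z ! i)))"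
    by (intro expectation_pmf_mono[OF finW] md_err_biorth_le_sum_exp length_in_replicate_pmf)
  also have "\<dots> = E ?W (\<lambda>z. \<Sum>(a, s)\<in>other_codeword_indices M. \<Prod>i\<in>minus_positions M a s. exp (-t * z ! i))"
    by (simp add: exp_sum sum_distrib_left finite_subset[OF sub])
  also have "\<dots> = (\<Sum>(a, s)\<in>other_codeword_indices M. E ?W (\<lambda>z. \<Prod>i\<in>minus_positions M a s. exp (-t * z ! i)))"
    unfolding case_prod_unfold
    by (rule Bochner_Integration.integral_sum) (simp add: integrable_measure_pmf_finite finW)
  also have "\<dots> = (\<Sum>(a, s)\<in>other_codeword_indices M. E p (\<lambda>x. exp (-t * x)) ^ card (minus_positions M a s))"
    unfolding case_prod_unfold by (intro sum.cong refl expectation_replicate_pmf_prod[OF fin sub])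
  also have "\<dots> \<le> (\<Sum>(a, s)\<in>other_codeword_indices M. q ^ 2 ^ g)"
  proof (intro sum_mono, clarify)
    fix a s assume "(a, s) \<in> other_codeword_indices M"
    then have "2 ^ Suc g \<le> 2 * card (minus_positions M a s)"
      unfolding M_def by (rule card_minus_positions)
    then have "2 ^ g \<le> card (minus_positions M a s)" by simp
    moreover have "E p (\<lambda>x. exp (-t * x)) ^ card (minus_positions M a s) \<le> q ^ card (minus_positions M a s)"
      by (intro power_mono[OF mgf] expectation_pmf_nonneg) simp
    ultimately show "E p (\<lambda>x. exp (-t * x)) ^ card (minus_positions M a s) \<le> q ^ 2 ^ g"
      using power_decreasing[OF _ q] order_trans by blast
  qed
  also have "\<dots> = (2 * 2 ^ M - 1) * exp (-(2 ^ g * \<mu>\<^sup>2 / (2 * v)))"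
    by (simp add: card_other_codeword_indices q_def exp_of_nat_mult[symmetric])
  finally show ?thesis by (simp add: M_def)
qed

section \<open>Paths in the recursion tree\<close>

lemma count_list_False_True: "count_list xs False + count_list xs True = length xs"
  by (induction xs) auto

lemma node_eq: "node m r xi = (m - length xi, r - count_list xi False)"
  by (induction xi arbitrary: m r) auto

lemma end_path_last_inner:
  assumes "end_path m r xi" "xi \<noteq> []"
  shows "1 < r - count_list (butlast xi) False"
    and "r - count_list (butlast xi) False < m - length (butlast xi)"
proof -
  have "length xi - 1 < length xi" using assms(2) by simp
  with assms(1) have "1 < snd (node m r (take (length xi - 1) xi))"
    "snd (node m r (take (length xi - 1) xi)) < fst (node m r (take (length xi - 1) xi))"
    unfolding end_path_def by blast+
  then show "1 < r - count_list (butlast xi) False"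
    "r - count_list (butlast xi) False < m - length (butlast xi)"
    by (simp_all add: node_eq butlast_conv_take)
qed

lemma end_path_biorth:
  assumes "end_path m r xi" "2 \<le> r" "snd (node m r xi) = 1"
  shows "count_list xi False = r - 1" "length xi + 2 \<le> m"
proof -
  show "count_list xi False = r - 1" using assms(2,3) by (simp add: node_eq)
  then have "xi \<noteq> []" using assms(2) by auto
  have "1 < r - count_list (butlast xi) False" "r - count_list (butlast xi) False < m - length (butlast xi)"
    using end_path_last_inner[OF assms(1) \<open>xi \<noteq> []\<close>] by auto
  moreover have "length (butlast xi) + 1 = length xi" using \<open>xi \<noteq> []\<close> by simp
  ultimately show "length xi + 2 \<le> m" by linarith
qed

text \<open>The last step into a full-space node must be a step 1: a step 0 keeps \<open>m' - r'\<close> unchanged,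
  and the node before it was inner.\<close>
lemma end_path_full:
  assumes "end_path m r xi" "r < m" "snd (node m r xi) = fst (node m r xi)"
  shows "count_list xi False + 2 \<le> r" "count_list xi True = m - r" "length xi + 2 \<le> m"
proof -
  have "xi \<noteq> []" using assms(2,3) by (auto simp: node_eq)
  define z where "z = count_list (butlast xi) False"
  define l where "l = length (butlast xi)"
  have inner: "1 < r - z" "r - z < m - l"
    using end_path_last_inner[OF assms(1) \<open>xi \<noteq> []\<close>] by (simp_all add: z_def l_def)
  have len: "length xi = l + 1" using \<open>xi \<noteq> []\<close> by (simp add: l_def)
  have "count_list xi False = count_list (butlast xi @ [last xi]) False"
    using \<open>xi \<noteq> []\<close> by simp
  then have zeros: "count_list xi False = z + (if last xi then 0 else 1)"
    by (simp add: z_def)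
  have eq: "r - count_list xi False = m - length xi" using assms(3) by (simp add: node_eq)
  have "last xi"
  proof (rule ccontr)
    assume "\<not> last xi"
    then have "r - (z + 1) = m - (l + 1)" using eq zeros len by simp
    with inner show False by linarith
  qed
  then have "count_list xi False = z" using zeros by simp
  then show "count_list xi False + 2 \<le> r" "length xi + 2 \<le> m" "count_list xi True = m - r"
    using inner eq len count_list_False_True[of xi] by linarith+
qed

lemma power_pow2_pred_square:
  fixes x :: "'a::monoid_mult"
  assumes "1 \<le> r"
  shows "(x ^ 2 ^ (r - 1))\<^sup>2 = x ^ 2 ^ r"
proof -
  have "2 ^ (r - 1) * 2 = (2::nat) ^ r" using assms by (cases r) simp_all
  then show ?thesis using power_mult[of x "2 ^ (r - 1)" 2] by simp
qed

lemma one_minus_inverse_power_le: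
  fixes x :: real
  assumes "0 \<le> x"
  shows "1 - 1 / (1 + x) ^ n \<le> n * x"
proof -
  have Q: "1 \<le> (1 + x) ^ n" using assms by simp
  have "ln (1 / (1 + x) ^ n) \<le> 1 / (1 + x) ^ n - 1"
    using Q by (intro ln_le_minus_one) simp
  moreover have "ln (1 / (1 + x) ^ n) = - ln ((1 + x) ^ n)"
    using assms by (simp add: ln_div)
  ultimately have "1 - 1 / (1 + x) ^ n \<le> ln ((1 + x) ^ n)" by simp
  also have "\<dots> = n * ln (1 + x)" using assms by (simp add: ln_realpow)
  also have "\<dots> \<le> n * x" using assms by (intro mult_left_mono ln_add_one_self_le_self) auto
  finally show ?thesis .
qed

lemma biorth_tail_lt:
  fixes g k m :: nat and C V Q :: real
  assumes "0 < V" "V \<le> 1" "V \<le> Q / 2 ^ k" "1 \<le> Q" "0 \<le> C"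
    and "C / 2 - C / (2 * Q) \<le> ln 2" and "g + 2 + k \<le> m"
  shows "(2 * 2 ^ Suc g - 1) * exp (-(C / 2 ^ k / (2 * V))) < 2 ^ m * exp (-(C / 2))"
proof -
  text \<open>The exponent may lose \<open>k ln 2\<close>, which the \<open>2^(g+2) \<le> 2^(m-k)\<close> competing codewords pay for.\<close>
  have exponent: "C / 2 - k * ln 2 \<le> C / 2 ^ k / (2 * V)"
  proof (cases "k = 0")
    case True
    have "C * V \<le> C" using assms(2,5) by (rule mult_left_le)
    then show ?thesis using True assms(1) by (simp add: le_divide_eq)
  next
    case False
    have "ln 2 \<le> k * ln (2::real)" using False by simp
    then have "C / 2 - k * ln 2 \<le> C / (2 * Q)" using assms(6) by linarith
    also have "\<dots> \<le> C / (2 * (2 ^ k * V))"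
      using assms(1,3,4,5) by (intro divide_left_mono mult_left_mono) (auto simp: field_simps)
    also have "\<dots> = C / 2 ^ k / (2 * V)" by (simp add: field_simps)
    finally show ?thesis .
  qed
  have "exp (k * ln 2) = (2::real) ^ k" by (simp add: exp_of_nat_mult)
  have "exp (-(C / 2 ^ k / (2 * V))) \<le> exp (k * ln 2 - C / 2)"
    using exponent by simp
  also have "\<dots> = 2 ^ k * exp (-(C / 2))"
    by (simp only: diff_conv_add_uminus exp_add \<open>exp (k * ln 2) = 2 ^ k\<close>)
  finally have "exp (-(C / 2 ^ k / (2 * V))) \<le> 2 ^ k * exp (-(C / 2))" .
  moreover have "(2 * 2 ^ Suc g - 1 :: real) < 2 ^ (g + 2)" by simp
  moreover have "(0::real) \<le> 2 * 2 ^ Suc g - 1" using one_le_power[of "2::real" "Suc g"] by simp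
  ultimately have "(2 * 2 ^ Suc g - 1) * exp (-(C / 2 ^ k / (2 * V))) < 2 ^ (g + 2) * (2 ^ k * exp (-(C / 2)))"
    by (intro mult_less_le_imp_less) simp_all
  also have "\<dots> = 2 ^ (g + 2 + k) * exp (-(C / 2))" by (simp add: power_add)
  also have "\<dots> \<le> 2 ^ m * exp (-(C / 2))"
    using assms(7) by (intro mult_right_mono power_increasing) auto
  finally show ?thesis .
qed

lemma exp_half_minus_ln2:
  fixes m :: nat and c :: real
  shows "exp (-(c / 2 - ln 2) * m) = 2 ^ m * exp (-(c * m / 2))"
proof -
  have "exp (-(c / 2 - ln 2) * m) = exp (m * ln 2) * exp (-(c * m / 2))"
    by (simp add: exp_add[symmetric] algebra_simps)
  then show ?thesis by (simp add: exp_of_nat_mult)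
qed

lemma biorth_node_error_lt:
  assumes path: "end_path m r xi" "snd (node m r xi) = 1" and "2 \<le> r"
    and e: "0 < e" "e < 1" and "0 < c"
    and X: "e ^ 2 ^ r = c * m * 2 powr (real r - real m)"
    and small: "c * m * (real r - 1) * e\<^sup>2 / 2 \<le> ln 2"
  shows "expect e (2 ^ m) (\<lambda>ys. md_err_biorth (fst (node m r xi)) (transf ys xi))
       < exp (-(c / 2 - ln 2) * m)"
proof -
  define k where "k = count_list xi True"
  define g where "g = m - length xi - 1"
  define Q where "Q = (1 + e\<^sup>2) ^ (r - 1)"
  have zeros: "count_list xi False = r - 1" and "length xi + 2 \<le> m"
    using end_path_biorth[OF path(1) \<open>2 \<le> r\<close> path(2)] by auto
  then have len: "length xi = r - 1 + k" and m: "m - length xi = Suc g" and gkm: "g + r + k = m"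
    using count_list_False_True[of xi] \<open>2 \<le> r\<close> by (auto simp: k_def g_def)
  obtain V where V: "unit_subgaussian (transf_pmf (bsc_pmf e) xi) (e ^ 2 ^ (r - 1)) V" "0 < V"
    "V \<le> Q / 2 ^ k" "V \<le> 1"
    using unit_subgaussian_transf_pmf[OF unit_subgaussian_bsc_pmf, of e xi] e zeros
    by (auto simp: k_def Q_def)
  have mean_sq: "(e ^ 2 ^ (r - 1))\<^sup>2 = e ^ 2 ^ r"
    using \<open>2 \<le> r\<close> by (intro power_pow2_pred_square) simp
  have scaled: "2 ^ g * (e ^ 2 ^ (r - 1))\<^sup>2 = c * m / 2 ^ k"
  proof -
    have "real g + (real r - real m) = - real k" using gkm by linarith
    then have "(2::real) ^ g * 2 powr (real r - real m) = 1 / 2 ^ k"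
      by (simp add: powr_realpow[symmetric] powr_add[symmetric] powr_minus divide_inverse)
    then show ?thesis unfolding mean_sq X by (simp add: field_simps)
  qed
  have "c * m / 2 - c * m / (2 * Q) = c * m / 2 * (1 - 1 / Q)"
    by (simp add: field_simps)
  also have "\<dots> \<le> c * m / 2 * ((r - 1) * e\<^sup>2)"
    using one_minus_inverse_power_le[of "e\<^sup>2" "r - 1"] \<open>0 < c\<close> by (intro mult_left_mono) (auto simp: Q_def)
  finally have ln2: "c * m / 2 - c * m / (2 * Q) \<le> ln 2"
    using small \<open>2 \<le> r\<close> by (simp add: of_nat_diff algebra_simps)
  have "expect e (2 ^ m) (\<lambda>ys. md_err_biorth (fst (node m r xi)) (transf ys xi))
      = E (replicate_pmf (2 ^ Suc g) (transf_pmf (bsc_pmf e) xi)) (md_err_biorth (Suc g))"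
    using expect_transf[of e xi m] e \<open>length xi + 2 \<le> m\<close> m by (simp add: node_eq)
  also have "\<dots> \<le> (2 * 2 ^ Suc g - 1) * exp (-(2 ^ g * (e ^ 2 ^ (r - 1))\<^sup>2 / (2 * V)))"
    by (rule expectation_md_err_biorth_le[OF V(1,2)]) (use e in simp)
  also have "\<dots> = (2 * 2 ^ Suc g - 1) * exp (-(c * m / 2 ^ k / (2 * V)))"
    by (simp only: scaled)
  also have "\<dots> < 2 ^ m * exp (-(c * m / 2))"
    by (rule biorth_tail_lt[OF V(2,4,3)]) (use \<open>0 < c\<close> ln2 gkm \<open>2 \<le> r\<close> in \<open>auto simp: Q_def\<close>)
  finally show ?thesis unfolding exp_half_minus_ln2 .
qed

lemma full_node_error_lt:
  assumes path: "end_path m r xi" "snd (node m r xi) = fst (node m r xi)" and "r < m"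
    and e: "0 < e" "e < 1" and \<sigma>: "\<sigma> < 2 ^ fst (node m r xi)"
    and large: "C * m < e ^ 2 ^ (r - 1) * 2 ^ (m - r) / 2 ^ (r + 1)"
  shows "expect e (2 ^ m) (\<lambda>ys. coord_err (transf ys xi ! \<sigma>)) < exp (- C * m)"
proof -
  define z where "z = count_list xi False"
  have z: "z + 2 \<le> r" and ones: "count_list xi True = m - r" and "length xi + 2 \<le> m"
    using end_path_full[OF path(1) \<open>r < m\<close> path(2)] by (auto simp: z_def)
  obtain V where V: "unit_subgaussian (transf_pmf (bsc_pmf e) xi) (e ^ 2 ^ z) V" "0 < V"
    "V \<le> (1 + e\<^sup>2) ^ z / 2 ^ (m - r)"
    using unit_subgaussian_transf_pmf[OF unit_subgaussian_bsc_pmf, of e xi] e ones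
    by (auto simp: z_def)
  have "e ^ 2 ^ (r - 1) \<le> e ^ 2 ^ Suc z"
    using z e by (intro power_decreasing power_increasing) auto
  then have mean_sq: "e ^ 2 ^ (r - 1) \<le> (e ^ 2 ^ z)\<^sup>2"
    by (simp add: power_mult[symmetric] mult.commute)
  have "(1 + e\<^sup>2) ^ z \<le> (2::real) ^ r"
    using e z by (intro order.trans[OF power_mono power_increasing[of z r 2]])
      (auto simp: power_le_one)
  then have "V \<le> 2 ^ r / 2 ^ (m - r)"
    using V(3) by (simp add: divide_right_mono order_trans)
  then have "2 * V \<le> 2 ^ (r + 1) / 2 ^ (m - r)" by simp
  then have "e ^ 2 ^ (r - 1) / (2 ^ (r + 1) / 2 ^ (m - r)) \<le> (e ^ 2 ^ z)\<^sup>2 / (2 * V)"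
    using mean_sq V(2) e by (intro frac_le) auto
  then have "C * m < (e ^ 2 ^ z)\<^sup>2 / (2 * V)"
    using large by simp
  then have "exp (-((e ^ 2 ^ z)\<^sup>2 / (2 * V))) < exp (- C * m)" by simp
  moreover have "expect e (2 ^ m) (\<lambda>ys. coord_err (transf ys xi ! \<sigma>))
      \<le> exp (-((e ^ 2 ^ z)\<^sup>2 / (2 * V)))"
    using expect_transf[of e xi m "\<lambda>w. coord_err (w ! \<sigma>)"] e \<open>length xi + 2 \<le> m\<close>
      expectation_coord_err_le[OF V(1,2), of \<sigma>] \<sigma> by (simp add: node_eq)
  ultimately show ?thesis by linarith
qed

lemma end_node_errors_lt:
  fixes b :: real
  assumes "2 \<le> r" "r < m" "0 < c" "0 < e" "e < 1"
    and "e ^ 2 ^ r = c * m * 2 powr (real r - real m)"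
    and "c * m * (real r - 1) * e\<^sup>2 / 2 \<le> ln 2"
    and "(c / 2 - ln 2) * m < e ^ 2 ^ (r - 1) * 2 ^ (m - r) / 2 ^ (r + 1)"
    and "exp (-(c / 2 - ln 2) * m) \<le> b"
  shows "\<forall>xi. end_path m r xi \<longrightarrow>
           (snd (node m r xi) = 1 \<longrightarrow>
              expect e (2 ^ m) (\<lambda>ys. md_err_biorth (fst (node m r xi)) (transf ys xi)) < b)
         \<and> (snd (node m r xi) = fst (node m r xi) \<longrightarrow>
              (\<forall>\<sigma> < 2 ^ fst (node m r xi). expect e (2 ^ m) (\<lambda>ys. coord_err (transf ys xi ! \<sigma>)) < b))"
proof (intro allI impI conjI)
  fix xi assume path: "end_path m r xi"
  show "expect e (2 ^ m) (\<lambda>ys. md_err_biorth (fst (node m r xi)) (transf ys xi)) < b"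
    if "snd (node m r xi) = 1"
    using biorth_node_error_lt[OF path that assms(1,4,5,3,6,7)] assms(9) by linarith
  show "expect e (2 ^ m) (\<lambda>ys. coord_err (transf ys xi ! \<sigma>)) < b"
    if "snd (node m r xi) = fst (node m r xi)" "\<sigma> < 2 ^ fst (node m r xi)" for \<sigma>
    using full_node_error_lt[OF path that(1) assms(2,4,5) that(2) assms(8)] assms(9) by linarith
qed

section \<open>Asymptotics of the crossover parameter\<close>

lemma tendsto_linear_times_geometric:
  "((\<lambda>m::nat. c * real m * 2 powr (R - real m)) \<longlongrightarrow> 0) sequentially"
  by real_asymp

lemma tendsto_linear_times_powr_geometric:
  fixes a c :: real
  assumes "0 < a" "0 < c"
  shows "((\<lambda>m::nat. K * real m * (c * real m * 2 powr (R - real m)) powr a) \<longlongrightarrow> 0) sequentially"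
  using assms by real_asymp

lemma filterlim_sqrt_linear_times_geometric:
  fixes c K :: real
  assumes "0 < K" "0 < c"
  shows "filterlim (\<lambda>m::nat. sqrt (c * real m * 2 powr (R - real m)) * 2 powr (real m - R) * K - C * real m)
           at_top sequentially"
  using assms by real_asymp

lemma eps_tilde_power:
  fixes c :: real
  assumes "0 < c" "0 < m"
  shows "eps_tilde r c m ^ n = (c * m * 2 powr (real r - real m)) powr (n / 2 ^ r)"
  unfolding eps_tilde_def using assms by (subst powr_power) simp_all

lemma eps_tilde_power_2r:
  fixes c :: real
  assumes "0 < c" "0 < m"
  shows "eps_tilde r c m ^ 2 ^ r = c * m * 2 powr (real r - real m)"
  using assms by (simp add: eps_tilde_power)

lemma eventually_eps_tilde_in_unit_interval:
  fixes c :: real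
  assumes "0 < c"
  shows "\<forall>\<^sub>F m in sequentially. 0 < eps_tilde r c m \<and> eps_tilde r c m < 1"
proof -
  have "\<forall>\<^sub>F m in sequentially. c * m * 2 powr (real r - real m) < 1"
    by (rule order_tendstoD(2)[OF tendsto_linear_times_geometric]) simp
  with eventually_gt_at_top[of 0] show ?thesis
  proof eventually_elim
    case (elim m)
    then have "0 < c * m * 2 powr (real r - real m)" "c * m * 2 powr (real r - real m) < 1"
    using assms by simp_all
  moreover from this have "(c * m * 2 powr (real r - real m)) powr (1 / 2 ^ r) < 1 powr (1 / 2 ^ r)"
    by (intro powr_less_mono2) auto
  ultimately show ?case using assms elim(1) by (simp add: eps_tilde_def)
  qed
qed

lemma eventually_eps_tilde_small:
  fixes c :: real
  assumes "0 < c"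
  shows "\<forall>\<^sub>F m in sequentially. c * m * (real r - 1) * (eps_tilde r c m)\<^sup>2 / 2 \<le> ln 2"
proof -
  have "((\<lambda>m::nat. c * (real r - 1) / 2 * real m * (c * real m * 2 powr (real r - real m)) powr (2 / 2 ^ r))
          \<longlongrightarrow> 0) sequentially"
    by (rule tendsto_linear_times_powr_geometric) (use assms in simp_all)
  then have "\<forall>\<^sub>F m in sequentially.
          c * (real r - 1) / 2 * real m * (c * real m * 2 powr (real r - real m)) powr (2 / 2 ^ r) < ln 2"
    by (rule order_tendstoD) simp
  with eventually_gt_at_top[of 0] show ?thesis
  proof eventually_elim
    case (elim m)
    then show ?case using assms by (simp add: eps_tilde_power algebra_simps)
  qed
qed

text \<open>\<open>\<tilde>\<epsilon>\<^sub>r ^ 2^(r-1)\<close> is the square root of \<open>c m 2^(r-m)\<close>, which beats any linear function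
  once multiplied by \<open>2^(m-r)\<close>.\<close>
lemma eventually_eps_tilde_large:
  fixes c C :: real
  assumes "2 \<le> r" "0 < c"
  shows "\<forall>\<^sub>F m in sequentially. C * m < eps_tilde r c m ^ 2 ^ (r - 1) * 2 ^ (m - r) / 2 ^ (r + 1)"
proof -
  have "(0::real) < 1 / 2 ^ (r + 1)" by simp
  from filterlim_sqrt_linear_times_geometric[OF this assms(2), of "real r" C]
  have "\<forall>\<^sub>F m in sequentially. 1 \<le> sqrt (c * real m * 2 powr (real r - real m)) * 2 powr (real m - real r)
                                      * (1 / 2 ^ (r + 1)) - C * real m"
    unfolding filterlim_at_top by blast
  with eventually_gt_at_top[of r] show ?thesis
  proof eventually_elim
    case (elim m)
    have "0 < m" using elim(1) by simp
    have "(eps_tilde r c m ^ 2 ^ (r - 1))\<^sup>2 = c * real m * 2 powr (real r - real m)"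
      using power_pow2_pred_square[of r "eps_tilde r c m"] assms(1) eps_tilde_power_2r[OF assms(2) \<open>0 < m\<close>]
      by simp
    then have "eps_tilde r c m ^ 2 ^ (r - 1) = sqrt (c * real m * 2 powr (real r - real m))"
      by (intro real_sqrt_unique[symmetric]) (simp_all add: eps_tilde_def)
    moreover have "(2::real) powr (real m - real r) = 2 ^ (m - r)"
      using elim(1) by (simp add: powr_realpow[symmetric] of_nat_diff)
    ultimately show ?case using elim(2) by simp
  qed
qed

lemma half_minus_ln2_pos: "ln 4 < (c::real) \<Longrightarrow> 0 < c / 2 - ln 2"
  using ln_realpow[of 2 2] by simp

lemma tendsto_bound:
  assumes "ln 4 < c"
  shows "bound r c \<longlonglongrightarrow> 0"
proof -
  have "((\<lambda>m::nat. exp (-(c / 2 - ln 2) * real m)) \<longlongrightarrow> 0) sequentially"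
    using half_minus_ln2_pos[OF assms] by real_asymp
  moreover have "((\<lambda>m::nat. 2 powr (-(real m - real r) / 2 + sqrt (real m))) \<longlongrightarrow> 0) sequentially"
    by real_asymp
  ultimately show ?thesis
    unfolding bound_def using tendsto_max[of _ 0 _ _ 0] by fastforce
qed

theorem theorem4:
  fixes r :: nat and c :: real
  assumes "r \<ge> 2" and "c > ln 4"
  shows "(\<forall>\<^sub>F m in sequentially. \<forall>xi. end_path m r xi \<longrightarrow>
            (snd (node m r xi) = 1 \<longrightarrow>
               expect (eps_tilde r c m) (2 ^ m)
                 (\<lambda>ys. md_err_biorth (fst (node m r xi)) (transf ys xi)) < bound r c m)
          \<and> (snd (node m r xi) = fst (node m r xi) \<longrightarrow>
               (\<forall>\<sigma> < 2 ^ fst (node m r xi).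
                  expect (eps_tilde r c m) (2 ^ m) (\<lambda>ys. coord_err (transf ys xi ! \<sigma>)) < bound r c m)))
         \<and> (bound r c \<longlonglongrightarrow> 0)" (is "?errors \<and> _")
proof
  have "0 < c" using half_minus_ln2_pos[OF assms(2)] ln_gt_zero[of "2::real"] by linarith
  have "\<forall>\<^sub>F m in sequentially. r < m \<and> (0 < eps_tilde r c m \<and> eps_tilde r c m < 1) \<and>
          c * m * (real r - 1) * (eps_tilde r c m)\<^sup>2 / 2 \<le> ln 2 \<and>
          (c / 2 - ln 2) * m < eps_tilde r c m ^ 2 ^ (r - 1) * 2 ^ (m - r) / 2 ^ (r + 1)"
    using eventually_gt_at_top eventually_eps_tilde_in_unit_interval[OF \<open>0 < c\<close>]
      eventually_eps_tilde_small[OF \<open>0 < c\<close>] eventually_eps_tilde_large[OF assms(1) \<open>0 < c\<close>]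
    by (simp add: eventually_conj_iff)
  then show ?errors
  proof eventually_elim
    case (elim m)
    then show ?case
      using end_node_errors_lt[OF assms(1) _ \<open>0 < c\<close> _ _ eps_tilde_power_2r[OF \<open>0 < c\<close>]]
      by (simp add: bound_def)
  qed
  show "bound r c \<longlonglongrightarrow> 0" using assms(2) by (rule tendsto_bound)
qed

end
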